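(* Let $\alpha>2$ with $\alpha\notin\mathbb N$ and $\lfloor\alpha\rfloor=2m$ for some $m\in\mathbb N$, and let $k\in\mathbb N$. With \[ L(\lambda)=2\sum_{j=1}^m\Big(1+2\lambda\cos\frac{2j\pi}{\alpha}+\lambda^2\Big)^{\alpha k/2}+(1-\alpha)(1+\lambda)^{\alpha k}-\frac{\alpha\sin(\alpha\pi)}{\pi}\int_0^{1/\lambda}\frac{s^{\alpha-1}(1-\lambda s)^{\alpha k}}{s^{2\alpha}-2s^\alpha\cos(\alpha\pi)+1}\,ds, \] there exists $\lambda_0>0$ such that $L(\lambda)<0$ for all $\lambda\in(0,\lambda_0)$. *)

theory Defs
  imports "HOL-Analysis.Analysis"
begin

text \<open>The function L(lambda) from the paper (parameters alpha, m, k).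
  Real powers with non-integer exponent are written with powr; all bases are
  nonnegative on the relevant range.\<close>
definition L_fun :: "real \<Rightarrow> nat \<Rightarrow> nat \<Rightarrow> real \<Rightarrow> real" where
  "L_fun \<alpha> m k lam =
     2 * (\<Sum>j=1..m. (1 + 2 * lam * cos (2 * real j * pi / \<alpha>) + lam^2) powr (\<alpha> * real k / 2))
     + (1 - \<alpha>) * (1 + lam) powr (\<alpha> * real k)
     - (\<alpha> * sin (\<alpha> * pi) / pi) *
       integral {0..1/lam}
         (%s. s powr (\<alpha> - 1) * (1 - lam * s) powr (\<alpha> * real k)
               / (s powr (2 * \<alpha>) - 2 * s powr \<alpha> * cos (\<alpha> * pi) + 1))"

end

theory Submission
  imports Defs
begin

text \<open>Put \<open>\<theta> = (\<alpha> - 2m)\<pi>\<close>, which lies in \<open>(0, \<pi>)\<close>, so that \<open>cos (\<alpha>\<pi>) = cos \<theta>\<close> and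
  \<open>sin (\<alpha>\<pi>) = sin \<theta> > 0\<close>. The kernel \<open>s^(\<alpha>-1) / (s^(2\<alpha>) - 2 s^\<alpha> cos \<theta> + 1)\<close> of the
  integral has the antiderivative \<open>arctan ((s^\<alpha> - cos \<theta>) / sin \<theta>) / (\<alpha> sin \<theta>)\<close>, so
  \<open>\<alpha> sin \<theta> / \<pi>\<close> times its integral over \<open>[0, R]\<close> equals \<open>1 - \<theta>/\<pi> = 2m + 1 - \<alpha> = L(0)\<close>
  up to an error \<open>O(R^-2)\<close>. Taking \<open>R = 1/\<lambda>\<close> and using Bernoulli's inequality
  \<open>(1 - \<lambda>s)^(\<alpha>k) \<ge> 1 - \<alpha>k\<lambda>s\<close>, the integral term of \<open>L(\<lambda>)\<close> is at least
  \<open>L(0) - \<alpha>k\<lambda>K - 2\<lambda>^2\<close>, where \<open>K\<close> bounds the first moment of the kernel. Hence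
  \<open>L(\<lambda>) \<le> \<lambda>\<alpha>k (2 \<Sum>j cos (2j\<pi>/\<alpha>) + 1 - \<alpha> + K) + o(\<lambda>)\<close>, and the bracket is negative
  because \<open>cos (2m\<pi>/\<alpha>) < -1/2\<close> and \<open>sin \<theta> \<le> \<theta>\<close>.\<close>

lemma Bernoulli_inequality_powr:
  fixes r x :: real
  assumes "1 \<le> r" "0 \<le> x" "x \<le> 1"
  shows "1 - r * x \<le> (1 - x) powr r"
proof (cases "x = 1")
  case True
  then show ?thesis using assms by simp
next
  case False
  then have x1: "x < 1" using assms by simp
  let ?f = "\<lambda>t. (1 - t) powr r + r * t"
  have "?f 0 \<le> ?f x"
  proof (rule DERIV_nonneg_imp_increasing_open[OF assms(2)])
    fix t assume t: "0 < t" "t < x"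
    have "(1 - t) powr (r - 1) \<le> 1"
      using t x1 assms by (intro powr_le1) auto
    then have "0 \<le> r * (1 - t) powr (r - 1) * (-1) + r"
      using assms by (simp add: algebra_simps)
    moreover have "DERIV ?f t :> r * (1 - t) powr (r - 1) * (-1) + r"
      using t x1 by (auto intro!: derivative_eq_intros)
    ultimately show "\<exists>y. DERIV ?f t :> y \<and> y \<ge> 0" by blast
  qed (use x1 in \<open>auto intro!: continuous_intros\<close>)
  then show ?thesis by simp
qed

lemma powr_double: "(s::real) powr (2 * a) = (s powr a)\<^sup>2"
  by (simp add: power2_eq_square flip: powr_add)

lemma kernel_denominator_pos:
  fixes c \<alpha> s :: real
  assumes "c < 1"
  shows "0 < s powr (2 * \<alpha>) - 2 * s powr \<alpha> * c + 1"
proof -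
  have x: "0 \<le> s powr \<alpha>" by simp
  show ?thesis
  proof (cases "c \<le> 0")
    case True
    then show ?thesis using x unfolding powr_double
      by (smt (verit) mult_nonneg_nonpos zero_le_power2)
  next
    case False
    then have "0 < 1 - c\<^sup>2" using assms by (simp add: power2_less_eq_zero_iff abs_square_less_1)
    moreover have "s powr (2 * \<alpha>) - 2 * s powr \<alpha> * c + 1 = (s powr \<alpha> - c)\<^sup>2 + (1 - c\<^sup>2)"
      unfolding powr_double by (simp add: power2_eq_square algebra_simps)
    ultimately show ?thesis by (smt (verit) zero_le_power2)
  qed
qed

definition kernel :: "real \<Rightarrow> real \<Rightarrow> real \<Rightarrow> real" where
  "kernel \<alpha> \<theta> s = s powr (\<alpha> - 1) / (s powr (2 * \<alpha>) - 2 * s powr \<alpha> * cos \<theta> + 1)"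

lemma kernel_nonneg: "cos \<theta> < 1 \<Longrightarrow> 0 \<le> kernel \<alpha> \<theta> s"
  unfolding kernel_def using kernel_denominator_pos[of "cos \<theta>" s \<alpha>] by simp

lemma continuous_on_kernel:
  assumes "1 < \<alpha>" "cos \<theta> < 1"
  shows "continuous_on {0..} (kernel \<alpha> \<theta>)"
  unfolding kernel_def using assms kernel_denominator_pos[of "cos \<theta>" _ \<alpha>]
  by (intro continuous_intros continuous_on_powr') (auto simp: less_imp_neq[symmetric])

lemma kernel_integrable_on:
  assumes "1 < \<alpha>" "cos \<theta> < 1" "0 \<le> a"
  shows "kernel \<alpha> \<theta> integrable_on {a..b}"
  using continuous_on_subset[OF continuous_on_kernel[OF assms(1,2)]] assms(3)
  by (intro integrable_continuous_interval) auto

lemma has_integral_kernel: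
  assumes \<theta>: "0 < \<theta>" "\<theta> < pi" and \<alpha>: "1 < \<alpha>" and R: "0 \<le> R"
  shows "(kernel \<alpha> \<theta> has_integral
           (arctan ((R powr \<alpha> - cos \<theta>) / sin \<theta>) + pi/2 - \<theta>) / (\<alpha> * sin \<theta>)) {0..R}"
proof -
  define F where "F s = arctan ((s powr \<alpha> - cos \<theta>) / sin \<theta>) / (\<alpha> * sin \<theta>)" for s
  have \<sigma>: "0 < sin \<theta>" using \<theta> by (rule sin_gt_zero)
  have "(kernel \<alpha> \<theta> has_integral F R - F 0) {0..R}"
  proof (rule fundamental_theorem_of_calculus_interior[OF R])
    show "continuous_on {0..R} F"
      unfolding F_def using \<alpha> \<sigma> by (intro continuous_intros continuous_on_powr') auto
  next
    fix s :: real assume "s \<in> {0<..<R}"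
    then have s: "0 < s" by simp
    define x where "x = s powr \<alpha>"
    have "(F has_real_derivative
          1 / (1 + ((x - cos \<theta>) / sin \<theta>)\<^sup>2) * (\<alpha> * s powr (\<alpha> - 1) / sin \<theta>) / (\<alpha> * sin \<theta>)) (at s)"
      unfolding F_def x_def using s
      by (auto intro!: derivative_eq_intros simp: divide_inverse mult_ac)
    moreover have "1 + ((x - cos \<theta>) / sin \<theta>)\<^sup>2
        = (s powr (2 * \<alpha>) - 2 * x * cos \<theta> + 1) / (sin \<theta>)\<^sup>2"
      using \<sigma> sin_cos_squared_add[of \<theta>] unfolding x_def powr_double
      by (simp add: field_simps power2_eq_square)
    ultimately show "(F has_vector_derivative kernel \<alpha> \<theta> s) (at s)"
      using \<sigma> \<alpha> unfolding kernel_def x_def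
      by (simp add: has_real_derivative_iff_has_vector_derivative power2_eq_square)
  qed
  moreover have "arctan (- cos \<theta> / sin \<theta>) = \<theta> - pi/2"
    using arctan_tan[of "\<theta> - pi/2"] \<theta> by (simp add: tan_def sin_diff cos_diff)
  then have "F 0 = (\<theta> - pi/2) / (\<alpha> * sin \<theta>)"
    unfolding F_def using \<alpha> by simp
  then have "F R - F 0 = (arctan ((R powr \<alpha> - cos \<theta>) / sin \<theta>) + pi/2 - \<theta>) / (\<alpha> * sin \<theta>)"
    unfolding F_def by (simp add: diff_divide_distrib add_divide_distrib)
  ultimately show ?thesis by simp
qed

lemma integral_kernel_le:
  assumes \<theta>: "0 < \<theta>" "\<theta> < pi" and "1 < \<alpha>" "0 \<le> R"
  shows "integral {0..R} (kernel \<alpha> \<theta>) \<le> (pi - \<theta>) / (\<alpha> * sin \<theta>)"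
proof -
  have "0 < \<alpha> * sin \<theta>" using assms by (simp add: sin_gt_zero)
  moreover have "arctan ((R powr \<alpha> - cos \<theta>) / sin \<theta>) + pi/2 - \<theta> \<le> pi - \<theta>"
    using arctan_ubound[of "(R powr \<alpha> - cos \<theta>) / sin \<theta>"] by simp
  ultimately show ?thesis
    using integral_unique[OF has_integral_kernel[OF assms]] by (simp add: divide_right_mono)
qed

lemma integral_kernel_ge:
  assumes \<theta>: "0 < \<theta>" "\<theta> < pi" and "1 < \<alpha>" "0 \<le> R" and R: "cos \<theta> < R powr \<alpha>"
  shows "(pi - \<theta>) / (\<alpha> * sin \<theta>) - 1 / (\<alpha> * (R powr \<alpha> - cos \<theta>)) \<le> integral {0..R} (kernel \<alpha> \<theta>)"
proof -
  define X where "X = (R powr \<alpha> - cos \<theta>) / sin \<theta>"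
  have \<sigma>: "0 < sin \<theta>" using \<theta> by (rule sin_gt_zero)
  then have "0 < X" unfolding X_def using R by simp
  then have "pi/2 - 1/X \<le> arctan X"
    using arctan_inverse[of X] arctan_le_self[of "1/X"] by (simp add: inverse_eq_divide)
  then have "(pi - \<theta> - 1/X) / (\<alpha> * sin \<theta>) \<le> (arctan X + pi/2 - \<theta>) / (\<alpha> * sin \<theta>)"
    using \<sigma> assms by (intro divide_right_mono) auto
  moreover have "(pi - \<theta> - 1/X) / (\<alpha> * sin \<theta>) = (pi - \<theta>) / (\<alpha> * sin \<theta>) - 1 / (\<alpha> * (R powr \<alpha> - cos \<theta>))"
    unfolding X_def using \<sigma> assms by (simp add: field_simps)
  ultimately show ?thesis
    using integral_unique[OF has_integral_kernel[OF \<theta> assms(3,4)]] unfolding X_def by simp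
qed

lemma scaled_integral_kernel_le:
  assumes \<theta>: "0 < \<theta>" "\<theta> < pi" and "1 < \<alpha>" "0 \<le> R"
  shows "\<alpha> * sin \<theta> / pi * integral {0..R} (kernel \<alpha> \<theta>) \<le> 1 - \<theta> / pi"
proof -
  have \<sigma>: "0 < sin \<theta>" using \<theta> by (rule sin_gt_zero)
  then have "\<alpha> * sin \<theta> / pi * integral {0..R} (kernel \<alpha> \<theta>) \<le> \<alpha> * sin \<theta> / pi * ((pi - \<theta>) / (\<alpha> * sin \<theta>))"
    using integral_kernel_le[OF assms] assms by (intro mult_left_mono) auto
  also have "\<dots> = 1 - \<theta> / pi"
    using \<sigma> assms by (simp add: field_simps)
  finally show ?thesis .
qed

lemma scaled_integral_kernel_ge:
  assumes \<theta>: "0 < \<theta>" "\<theta> < pi" and \<alpha>: "2 \<le> \<alpha>" and R: "2 \<le> R"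
  shows "1 - \<theta> / pi - 2 / R\<^sup>2 \<le> \<alpha> * sin \<theta> / pi * integral {0..R} (kernel \<alpha> \<theta>)"
proof -
  have \<sigma>: "0 < sin \<theta>" "sin \<theta> \<le> 1" using \<theta> by (auto simp: sin_gt_zero)
  have "R\<^sup>2 \<le> R powr \<alpha>"
    using powr_mono[OF \<alpha>, of R] R by (simp add: powr_numeral)
  moreover have R4: "4 \<le> R\<^sup>2" using power_mono[OF R, of 2] by simp
  ultimately have X: "R\<^sup>2 / 2 \<le> R powr \<alpha> - cos \<theta>"
    using cos_le_one[of \<theta>] by linarith
  moreover have "R powr \<alpha> - cos \<theta> \<le> pi * (R powr \<alpha> - cos \<theta>)"
    using X R4 pi_gt3 by (simp add: mult_le_cancel_right1)
  ultimately have "R\<^sup>2 / 2 \<le> pi * (R powr \<alpha> - cos \<theta>)" by linarith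
  then have "sin \<theta> / (pi * (R powr \<alpha> - cos \<theta>)) \<le> 1 / (R\<^sup>2 / 2)"
    using \<sigma> R by (intro frac_le) auto
  moreover have "1 - \<theta> / pi - sin \<theta> / (pi * (R powr \<alpha> - cos \<theta>))
      = \<alpha> * sin \<theta> / pi * ((pi - \<theta>) / (\<alpha> * sin \<theta>) - 1 / (\<alpha> * (R powr \<alpha> - cos \<theta>)))"
    using \<sigma> \<alpha> X R4 by (simp add: field_simps)
  moreover have "\<alpha> * sin \<theta> / pi * ((pi - \<theta>) / (\<alpha> * sin \<theta>) - 1 / (\<alpha> * (R powr \<alpha> - cos \<theta>)))
      \<le> \<alpha> * sin \<theta> / pi * integral {0..R} (kernel \<alpha> \<theta>)"
    using integral_kernel_ge[OF \<theta>, of \<alpha> R] \<sigma> \<alpha> X R R4 by (intro mult_left_mono) auto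
  ultimately show ?thesis by simp
qed

lemma s_kernel_le:
  assumes "1 \<le> \<alpha>" "cos \<theta> < 1" "1 \<le> s"
  shows "s * kernel \<alpha> \<theta> s \<le> 2 * kernel \<alpha> \<theta> s + s powr (- \<alpha>)"
proof -
  define u where "u = s powr (\<alpha> - 1)"
  define D where "D = s powr (2 * \<alpha>) - 2 * s powr \<alpha> * cos \<theta> + 1"
  have u: "1 \<le> u" unfolding u_def using assms by (simp add: ge_one_powr_ge_zero)
  have su: "s powr \<alpha> = s * u"
    unfolding u_def using assms powr_add[of s 1 "\<alpha> - 1"] by simp
  have D: "0 < D" unfolding D_def using assms(2) by (rule kernel_denominator_pos)
  have "D = s\<^sup>2 * u\<^sup>2 - 2 * s * u * cos \<theta> + 1"
    unfolding D_def powr_double su by (simp add: power2_eq_square)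
  \<comment> \<open>after multiplying by \<open>s u D\<close> the claim reads \<open>0 \<le> 2 s u (u - cos \<theta>) + 1\<close>\<close>
  moreover have "0 \<le> 2 * s * u * (u - cos \<theta>)"
    using u assms by simp
  ultimately have "s * u * (s * u) \<le> s * u * (2 * u) + D"
    by (simp add: power2_eq_square algebra_simps)
  then have "s * u / D \<le> 2 * u / D + 1 / (s * u)"
    using u assms D by (simp add: field_simps)
  moreover have "kernel \<alpha> \<theta> s = u / D"
    unfolding kernel_def u_def D_def ..
  moreover have "s powr (- \<alpha>) = 1 / (s * u)"
    by (simp add: powr_minus_divide su)
  ultimately show ?thesis by simp
qed

lemma integral_powr_le:
  fixes \<alpha> R :: real
  assumes "1 < \<alpha>" "1 \<le> R"
  shows "integral {1..R} (\<lambda>s. s powr (- \<alpha>)) \<le> 1 / (\<alpha> - 1)"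
proof -
  have tail: "((\<lambda>s. s powr (- \<alpha>)) has_integral 1 / (\<alpha> - 1)) {1..}"
    using has_integral_powr_to_inf[of "- \<alpha>" 1] assms by (simp add: minus_divide_right)
  show ?thesis
  proof (subst integral_unique[OF tail, symmetric], rule integral_subset_le)
    show "(\<lambda>s. s powr (- \<alpha>)) integrable_on {1..R}"
      by (intro integrable_continuous_interval continuous_intros) auto
  qed (use tail in \<open>auto simp: has_integral_integrable\<close>)
qed

lemma integral_s_kernel_le:
  assumes \<alpha>: "1 < \<alpha>" and c: "cos \<theta> < 1" and R: "1 \<le> R"
  shows "integral {0..R} (\<lambda>s. s * kernel \<alpha> \<theta> s) \<le> 2 * integral {0..R} (kernel \<alpha> \<theta>) + 1 / (\<alpha> - 1)"
proof -
  have k: "kernel \<alpha> \<theta> integrable_on {a..b}" if "0 \<le> a" for a b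
    using kernel_integrable_on[OF \<alpha> c that] .
  have sk: "(\<lambda>s. s * kernel \<alpha> \<theta> s) integrable_on {a..b}" if "0 \<le> a" for a b
    using continuous_on_subset[OF continuous_on_kernel[OF \<alpha> c]] that
    by (intro integrable_continuous_interval continuous_intros) auto
  have p: "(\<lambda>s. s powr (- \<alpha>)) integrable_on {1..R}"
    by (intro integrable_continuous_interval continuous_intros) auto
  have "integral {0..1} (\<lambda>s. s * kernel \<alpha> \<theta> s) \<le> integral {0..1} (\<lambda>s. 2 * kernel \<alpha> \<theta> s)"
    using k sk kernel_nonneg[OF c] by (intro integral_le mult_right_mono integrable_on_cmult_left) auto
  moreover have "integral {1..R} (\<lambda>s. s * kernel \<alpha> \<theta> s)
      \<le> integral {1..R} (\<lambda>s. 2 * kernel \<alpha> \<theta> s + s powr (- \<alpha>))"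
    using k sk p s_kernel_le[OF _ c] \<alpha> by (intro integral_le integrable_add integrable_on_cmult_left) auto
  moreover have "integral {1..R} (\<lambda>s. s powr (- \<alpha>)) \<le> 1 / (\<alpha> - 1)"
    using integral_powr_le[OF \<alpha> R] .
  moreover have "integral {0..R} f = integral {0..1} f + integral {1..R} f"
    if "f integrable_on {0..R}" for f :: "real \<Rightarrow> real"
    using Henstock_Kurzweil_Integration.integral_combine[of 0 1 R f] R that by simp
  ultimately show ?thesis
    using k sk p by (simp add: integral_add)
qed

lemma integral_kernel_weight_ge:
  assumes \<alpha>: "1 < \<alpha>" and c: "cos \<theta> < 1" and r: "1 \<le> r" and lam: "0 < lam"
  shows "integral {0..1/lam} (kernel \<alpha> \<theta>) - r * lam * integral {0..1/lam} (\<lambda>s. s * kernel \<alpha> \<theta> s)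
     \<le> integral {0..1/lam} (\<lambda>s. kernel \<alpha> \<theta> s * (1 - lam * s) powr r)"
proof -
  have k: "continuous_on {0..1/lam} (kernel \<alpha> \<theta>)"
    using continuous_on_subset[OF continuous_on_kernel[OF \<alpha> c]] by auto
  have w: "continuous_on {0..1/lam} (\<lambda>s. (1 - lam * s) powr r)"
    using lam r by (intro continuous_on_powr' continuous_intros) (auto simp: field_simps)
  have "integral {0..1/lam} (\<lambda>s. kernel \<alpha> \<theta> s - r * lam * (s * kernel \<alpha> \<theta> s))
     \<le> integral {0..1/lam} (\<lambda>s. kernel \<alpha> \<theta> s * (1 - lam * s) powr r)"
  proof (rule integral_le)
    fix s assume "s \<in> {0..1/lam}"
    then have "0 \<le> lam * s" "lam * s \<le> 1" using lam by (auto simp: field_simps)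
    then have "1 - r * (lam * s) \<le> (1 - lam * s) powr r"
      by (rule Bernoulli_inequality_powr[OF r])
    then have "(1 - r * (lam * s)) * kernel \<alpha> \<theta> s \<le> (1 - lam * s) powr r * kernel \<alpha> \<theta> s"
      using kernel_nonneg[OF c] by (rule mult_right_mono)
    then show "kernel \<alpha> \<theta> s - r * lam * (s * kernel \<alpha> \<theta> s) \<le> kernel \<alpha> \<theta> s * (1 - lam * s) powr r"
      by (simp add: algebra_simps)
  qed (use k w in \<open>auto intro!: integrable_continuous_interval continuous_intros\<close>)
  then show ?thesis
    using k by (simp add: integral_diff integrable_continuous_interval continuous_intros)
qed

lemma scaled_integral_kernel_weight_ge:
  assumes \<theta>: "0 < \<theta>" "\<theta> < pi" and \<alpha>: "2 \<le> \<alpha>" and r: "1 \<le> r" and lam: "0 < lam" "lam \<le> 1/2"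
  shows "1 - \<theta> / pi - 2 * lam\<^sup>2 - r * lam * (2 * (1 - \<theta> / pi) + \<alpha> * sin \<theta> / (pi * (\<alpha> - 1)))
     \<le> \<alpha> * sin \<theta> / pi * integral {0..1/lam} (\<lambda>s. kernel \<alpha> \<theta> s * (1 - lam * s) powr r)"
proof -
  define P where "P = \<alpha> * sin \<theta> / pi"
  define I where "I = integral {0..1/lam} (kernel \<alpha> \<theta>)"
  define J where "J = integral {0..1/lam} (\<lambda>s. s * kernel \<alpha> \<theta> s)"
  have c: "cos \<theta> < 1" using \<theta> cos_monotone_0_pi[of 0 \<theta>] by simp
  have P: "0 \<le> P" unfolding P_def using \<theta> \<alpha> by (simp add: sin_ge_zero)
  have R: "2 \<le> 1/lam" using lam by (simp add: field_simps)
  have lower: "1 - \<theta> / pi - 2 * lam\<^sup>2 \<le> P * I"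
    using scaled_integral_kernel_ge[OF \<theta> \<alpha> R] unfolding P_def I_def by (simp add: power_one_over)
  have upper: "P * I \<le> 1 - \<theta> / pi"
    using scaled_integral_kernel_le[OF \<theta>, of \<alpha> "1/lam"] \<alpha> lam unfolding P_def I_def by simp
  have "P * J \<le> P * (2 * I + 1 / (\<alpha> - 1))"
    using integral_s_kernel_le[OF _ c, of \<alpha> "1/lam"] \<alpha> R P unfolding I_def J_def
    by (intro mult_left_mono) auto
  also have "\<dots> = 2 * (P * I) + \<alpha> * sin \<theta> / (pi * (\<alpha> - 1))"
    unfolding P_def by (simp add: algebra_simps)
  finally have "P * J \<le> 2 * (1 - \<theta> / pi) + \<alpha> * sin \<theta> / (pi * (\<alpha> - 1))"
    using upper by argo
  then have "r * lam * (P * J) \<le> r * lam * (2 * (1 - \<theta> / pi) + \<alpha> * sin \<theta> / (pi * (\<alpha> - 1)))"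
    using r lam by (intro mult_left_mono) auto
  moreover have "P * (I - r * lam * J) \<le> P * integral {0..1/lam} (\<lambda>s. kernel \<alpha> \<theta> s * (1 - lam * s) powr r)"
    using integral_kernel_weight_ge[OF _ c r lam(1), of \<alpha>] \<alpha> P unfolding I_def J_def
    by (intro mult_left_mono) auto
  ultimately show ?thesis
    using lower unfolding P_def by (simp add: algebra_simps)
qed

lemma eventually_neg_at_right_0:
  fixes A f :: "real \<Rightarrow> real"
  assumes A: "(A has_real_derivative a) (at 0)" and ab: "a + b < 0"
    and f: "\<forall>\<^sub>F x in at_right 0. f x \<le> A x - A 0 + b * x + C * x\<^sup>2"
  shows "\<forall>\<^sub>F x in at_right 0. f x < 0"
proof -
  have "((\<lambda>x. (A x - A 0) / x) \<longlongrightarrow> a) (at_right 0)"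
    using A unfolding has_field_derivative_iff by (auto intro: tendsto_mono[OF at_le])
  then have "((\<lambda>x. (A x - A 0) / x + b + C * x) \<longlongrightarrow> a + b + C * 0) (at_right 0)"
    by (intro tendsto_intros)
  then have "\<forall>\<^sub>F x in at_right 0. (A x - A 0) / x + b + C * x < 0"
    using ab by (intro order_tendstoD(2)) auto
  with f eventually_at_right_less[of 0] show ?thesis
  proof eventually_elim
    case (elim x)
    then have "A x - A 0 + b * x + C * x\<^sup>2 = x * ((A x - A 0) / x + b + C * x)"
      by (simp add: field_simps power2_eq_square)
    also have "\<dots> < 0" using elim by (simp add: mult_pos_neg)
    finally show ?case using elim by linarith
  qed
qed

lemma sum_cos_lt:
  fixes \<alpha> :: real
  assumes m: "1 \<le> m" and \<alpha>: "2 * real m \<le> \<alpha>" "\<alpha> < 3 * real m"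
  shows "(\<Sum>j=1..m. cos (2 * real j * pi / \<alpha>)) < real m - 3/2"
proof -
  obtain n where n: "m = Suc n" using m by (cases m) auto
  have "cos (2 * real m * pi / \<alpha>) < cos (2 * pi / 3)"
    using \<alpha> m by (intro cos_monotone_0_pi) (auto simp: field_simps)
  then have "cos (2 * real m * pi / \<alpha>) < - 1/2" by (simp add: cos_120)
  moreover have "(\<Sum>j=1..n. cos (2 * real j * pi / \<alpha>)) \<le> real n"
    using sum_bounded_above[of "{1..n}" "\<lambda>j. cos (2 * real j * pi / \<alpha>)" 1] by simp
  ultimately show ?thesis using n by simp
qed

lemma first_order_coefficient_neg:
  fixes \<alpha> :: real
  assumes m: "1 \<le> m" and \<alpha>: "real (2 * m) < \<alpha>" "\<alpha> < real (2 * m) + 1"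
  shows "2 * (\<Sum>j=1..m. cos (2 * real j * pi / \<alpha>)) + 1 - \<alpha> + 2 * (2 * real m + 1 - \<alpha>)
         + \<alpha> * sin ((\<alpha> - real (2 * m)) * pi) / (pi * (\<alpha> - 1)) < 0"
proof -
  have "\<alpha> * sin ((\<alpha> - real (2 * m)) * pi) \<le> \<alpha> * ((\<alpha> - real (2 * m)) * pi)"
    using sin_x_le_x[of "(\<alpha> - real (2 * m)) * pi"] \<alpha> by (intro mult_left_mono) auto
  then have "\<alpha> * sin ((\<alpha> - real (2 * m)) * pi) / (pi * (\<alpha> - 1)) \<le> \<alpha> * (\<alpha> - real (2 * m)) / (\<alpha> - 1)"
    using \<alpha> m by (simp add: divide_simps)
  also have "\<dots> \<le> 2 * (\<alpha> - real (2 * m))"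
  proof (subst pos_divide_le_eq)
    have "0 \<le> (\<alpha> - real (2 * m)) * (\<alpha> - 2)" using \<alpha> m by simp
    then show "\<alpha> * (\<alpha> - real (2 * m)) \<le> 2 * (\<alpha> - real (2 * m)) * (\<alpha> - 1)"
      by (simp add: algebra_simps)
  qed (use \<alpha> m in simp)
  finally show ?thesis
    using sum_cos_lt[OF m, of \<alpha>] \<alpha> m by simp
qed

theorem lemma6p5:
  fixes \<alpha> :: real and m k :: nat
  assumes "\<alpha> > 2" and "\<alpha> \<notin> \<nat>" and "\<lfloor>\<alpha>\<rfloor> = int (2 * m)" and "k \<ge> 1"
  shows "\<exists>lam0>0. \<forall>lam. 0 < lam \<and> lam < lam0 \<longrightarrow> L_fun \<alpha> m k lam < 0"
proof -
  define \<theta> where "\<theta> = (\<alpha> - real (2 * m)) * pi"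
  define r where "r = \<alpha> * real k"
  define S where "S = (\<Sum>j=1..m. cos (2 * real j * pi / \<alpha>))"
  define K where "K = 2 * (1 - \<theta> / pi) + \<alpha> * sin \<theta> / (pi * (\<alpha> - 1))"
  define A where "A lam = 2 * (\<Sum>j=1..m. (1 + 2 * lam * cos (2 * real j * pi / \<alpha>) + lam\<^sup>2) powr (r / 2))
      + (1 - \<alpha>) * (1 + lam) powr r" for lam
  have "2 \<le> \<lfloor>\<alpha>\<rfloor>" using assms(1) by (simp add: le_floor_iff)
  then have m: "1 \<le> m" using assms(3) by simp
  have \<alpha>: "real (2 * m) < \<alpha>" "\<alpha> < real (2 * m) + 1"
    using assms(2,3) floor_correct[of \<alpha>] by (auto simp: order_le_less)
  then have \<theta>: "0 < \<theta>" "\<theta> < pi" unfolding \<theta>_def by auto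
  have "\<alpha> * pi = \<theta> + 2 * real m * pi" unfolding \<theta>_def by (simp add: algebra_simps)
  then have trig: "cos (\<alpha> * pi) = cos \<theta>" "sin (\<alpha> * pi) = sin \<theta>" by (simp_all add: cos_add sin_add)
  have r: "1 \<le> r" unfolding r_def using mult_mono[of 1 \<alpha> 1 "real k"] assms(1,4) by simp
  have A0: "A 0 = 1 - \<theta> / pi" unfolding A_def \<theta>_def by simp
  have "2 * S + 1 - \<alpha> + K < 0"
    using first_order_coefficient_neg[OF m \<alpha>, folded \<theta>_def S_def] unfolding K_def \<theta>_def by simp
  then have slope: "r * (2 * S + 1 - \<alpha>) + r * K < 0"
    using r mult_pos_neg[of r] by (simp flip: distrib_left)
  have deriv: "(A has_real_derivative r * (2 * S + 1 - \<alpha>)) (at 0)"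
    unfolding A_def S_def by (auto intro!: derivative_eq_intros simp: sum_distrib_left algebra_simps)
  have "\<forall>\<^sub>F lam in at_right 0. L_fun \<alpha> m k lam \<le> A lam - A 0 + r * K * lam + 2 * lam\<^sup>2"
    unfolding eventually_at_right_field
  proof (intro exI[of _ "1/2"] allI impI conjI)
    fix lam :: real assume lam: "0 < lam" "lam < 1/2"
    have "L_fun \<alpha> m k lam
        = A lam - \<alpha> * sin \<theta> / pi * integral {0..1/lam} (\<lambda>s. kernel \<alpha> \<theta> s * (1 - lam * s) powr r)"
      unfolding L_fun_def A_def kernel_def trig r_def by simp
    then show "L_fun \<alpha> m k lam \<le> A lam - A 0 + r * K * lam + 2 * lam\<^sup>2"
      using scaled_integral_kernel_weight_ge[OF \<theta> _ r, of \<alpha> lam, folded K_def] assms(1) lam A0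
      by (simp add: mult.commute mult.left_commute)
  qed simp
  with deriv slope have "\<forall>\<^sub>F lam in at_right 0. L_fun \<alpha> m k lam < 0"
    by (rule eventually_neg_at_right_0)
  then show ?thesis unfolding eventually_at_right_field by auto
qed

end
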